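(* Let $\varphi:\mathcal X\to\mathbb R^m$ and let $p,q$ be probability distributions on $\mathcal X$ with $\Sigma_q$ invertible. Let $(v_i)_{i=1}^m$ be a basis of generalized eigenvectors of the pair $(\Sigma_p,\Sigma_q)$: $v_i^\top\Sigma_q v_j=1_{i=j}$ and $\Sigma_p v_i=\lambda_i\Sigma_q v_i$. Let $h(\lambda)=f(\lambda)/(\lambda-1)^2$ (with $h(1)=f''(1)/2$) and define $$c=\sum_{i=1}^m h(\lambda_i)\,v_iv_i^\top(\mu_p-\mu_q),$$ $$M=\sum_{i,j=1}^m \big((\mu_p-\mu_q)^\top v_i\big)\big(v_j^\top(\mu_p-\mu_q)\big)\frac{h(\lambda_i)-h(\lambda_j)}{\lambda_i-\lambda_j}\,v_iv_j^\top,$$ $$N=-\sum_{i,j=1}^m \big((\mu_p-\mu_q)^\top v_i\big)\big(v_j^\top(\mu_p-\mu_q)\big)\frac{\lambda_ih(\lambda_i)-\lambda_jh(\lambda_j)}{\lambda_i-\lambda_j}\,v_iv_j^\top,$$ where divided differences are replaced by the corresponding derivatives when $\lambda_i=\lambda_j$. Define $v(x)=\varphi(x)^\top M\varphi(x)+2c^\top\varphi(x)$ and $w(x)=\varphi(x)^\top N\varphi(x)-2c^\top\varphi(x)$. Then $v,w$ are feasible, i.e. $w(x)\le -f^*(v(x))$ for all $x\in\mathcal X$ (equivalently $\lambda v(x)+w(x)\le f(\lambda)$ for all $\lambda>0$, $x\in\mathcal X$), and $$F(p\|q,\varphi)=\int_{\mathcal X}v\,dp+\int_{\mathcal X}w\,dq=\sum_{i=1}^m\frac{f(\lambda_i)}{(\lambda_i-1)^2}\big((\mu_p-\mu_q)^\top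 v_i\big)^2 .$$
   Context: Let $\nu$ be a probability measure on $[0,1]$ and $f(t)=\int_0^1\frac12\frac{(t-1)^2}{\rho t+1-\rho}\,d\nu(\rho)$ for $t>0$; $f^*(u)=\sup_{t>0}(ut-f(t))$. Moments: $\mu_p=\int\varphi\,dp$, $\mu_q=\int\varphi\,dq$, $\Sigma_p=\int\varphi\varphi^\top dp$, $\Sigma_q=\int\varphi\varphi^\top dq$. The moment-based divergence is $F(p\|q,\varphi)=\frac12\int_0^1(\mu_p-\mu_q)^\top(\rho\Sigma_p+(1-\rho)\Sigma_q)^{-1}(\mu_p-\mu_q)\,d\nu(\rho)$. The term $f(\lambda_i)/(\lambda_i-1)^2$ is interpreted as $f''(1)/2$ when $\lambda_i=1$. *)

theory Defs
  imports "HOL-Probability.Probability"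
begin

definition fgen :: "real measure \<Rightarrow> real \<Rightarrow> real" where
  "fgen \<nu> t = (\<integral>\<rho>. (1/2) * (t - 1)^2 / (\<rho> * t + 1 - \<rho>) \<partial>\<nu>)"

definition fconj :: "real measure \<Rightarrow> real \<Rightarrow> ereal" where
  "fconj \<nu> u = (SUP t\<in>{0<..}. ereal (u * t - fgen \<nu> t))"

definition hfun :: "real measure \<Rightarrow> real \<Rightarrow> real" where
  "hfun \<nu> l = (if l = 1 then deriv (deriv (fgen \<nu>)) 1 / 2
               else fgen \<nu> l / (l - 1)^2)"

definition divdiff :: "(real \<Rightarrow> real) \<Rightarrow> real \<Rightarrow> real \<Rightarrow> real" where
  "divdiff g a b = (if a = b then deriv g a else (g a - g b) / (a - b))"

definition outer :: "real^'m \<Rightarrow> real^'m \<Rightarrow> real^'m^'m" where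
  "outer x y = (\<chi> i j. x $ i * y $ j)"

definition mean_vec :: "'a measure \<Rightarrow> ('a \<Rightarrow> real^'m) \<Rightarrow> real^'m" where
  "mean_vec p \<phi> = (\<integral>x. \<phi> x \<partial>p)"

definition second_moment :: "'a measure \<Rightarrow> ('a \<Rightarrow> real^'m) \<Rightarrow> real^'m^'m" where
  "second_moment p \<phi> = (\<integral>x. outer (\<phi> x) (\<phi> x) \<partial>p)"

definition Fdiv :: "real measure \<Rightarrow> 'a measure \<Rightarrow> 'a measure \<Rightarrow> ('a \<Rightarrow> real^'m) \<Rightarrow> real" where
  "Fdiv \<nu> p q \<phi> =
     (let d = mean_vec p \<phi> - mean_vec q \<phi>;
          Sp = second_moment p \<phi>; Sq = second_moment q \<phi>
      in (1/2) * (\<integral>\<rho>. d \<bullet> (matrix_inv (\<rho> *\<^sub>R Sp + (1 - \<rho>) *\<^sub>R Sq) *v d) \<partial>\<nu>))"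


text \<open>The dual certificate built from the generalized eigenbasis V with eigenvalues lam;
  d = mu_p - mu_q.\<close>
definition cvec :: "real measure \<Rightarrow> real^'m \<Rightarrow> ('m \<Rightarrow> real^'m) \<Rightarrow> ('m \<Rightarrow> real) \<Rightarrow> real^'m" where
  "cvec \<nu> d V lam = (\<Sum>i\<in>UNIV. (hfun \<nu> (lam i) * (V i \<bullet> d)) *\<^sub>R V i)"

definition Mmat :: "real measure \<Rightarrow> real^'m \<Rightarrow> ('m \<Rightarrow> real^'m) \<Rightarrow> ('m \<Rightarrow> real) \<Rightarrow> real^'m^'m" where
  "Mmat \<nu> d V lam = (\<Sum>i\<in>UNIV. \<Sum>j\<in>UNIV.
     ((d \<bullet> V i) * (V j \<bullet> d) * divdiff (hfun \<nu>) (lam i) (lam j)) *\<^sub>R outer (V i) (V j))"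

definition Nmat :: "real measure \<Rightarrow> real^'m \<Rightarrow> ('m \<Rightarrow> real^'m) \<Rightarrow> ('m \<Rightarrow> real) \<Rightarrow> real^'m^'m" where
  "Nmat \<nu> d V lam = - (\<Sum>i\<in>UNIV. \<Sum>j\<in>UNIV.
     ((d \<bullet> V i) * (V j \<bullet> d) * divdiff (\<lambda>l. l * hfun \<nu> l) (lam i) (lam j)) *\<^sub>R outer (V i) (V j))"

end

(*
  Write L(rho,t) = rho t + 1 - rho, which is positive for rho in [0,1] and t > 0. Then
  h(lambda) = f(lambda)/(lambda-1)^2 is the nu-integral of 1/(2 L(rho,lambda)), and the divided
  differences [h](a,b) and [lambda h](a,b) are the nu-integrals of -rho/(2 L(rho,a) L(rho,b)) and
  (1-rho)/(2 L(rho,a) L(rho,b)); hence t [h](a,b) - [lambda h](a,b) is minus the integral of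
  L(rho,t)/(2 L(rho,a) L(rho,b)).

  With y_i = (d.v_i)(phi(x).v_i) and s = sum_i y_i / L(rho,lambda_i), this makes t v(x) + w(x)
  the nu-integral of the concave quadratic -(L(rho,t)/2) s^2 + (t-1) s, whose maximum over s,
  (t-1)^2/(2 L(rho,t)), is the integrand of f(t): that is feasibility.

  In the basis v_i the pencil rho Sigma_p + (1-rho) Sigma_q has inverse
  sum_i v_i v_i^T / L(rho,lambda_i), which evaluates F. The same diagonalisation reduces
  E_p v + E_q w to 2 c.d plus the diagonal terms lambda_i [h](lambda_i,lambda_i)
  - [lambda h](lambda_i,lambda_i) = -h(lambda_i), giving the same sum.
*)

theory Submission
  imports Defs
begin

lemma has_field_derivative_slope:
  fixes g G :: "real \<Rightarrow> real"
  assumes "open S" "a \<in> S" and slope: "\<And>z. z \<in> S \<Longrightarrow> g z - g a = (z - a) * G z"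
    and "isCont G a"
  shows "(g has_field_derivative G a) (at a)"
proof -
  have "\<forall>\<^sub>F z in at a. (g z - g a) / (z - a) = G z"
    using eventually_at_in_open[OF assms(1,2)] by eventually_elim (simp add: slope)
  then show ?thesis
    using \<open>isCont G a\<close> by (simp add: has_field_derivative_iff isCont_def tendsto_cong)
qed

lemma divdiff_eq_slope_kernel:
  fixes g :: "real \<Rightarrow> real" and G :: "real \<Rightarrow> real \<Rightarrow> real"
  assumes "open S" "a \<in> S"
    and slope: "\<And>x y. x \<in> S \<Longrightarrow> y \<in> S \<Longrightarrow> g x - g y = (x - y) * G x y"
    and cont: "isCont (\<lambda>x. G x a) a"
    and "b \<in> S"
  shows "divdiff g a b = G a b"
proof (cases "a = b")
  case True
  have "(g has_field_derivative G a a) (at a)"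
    using slope \<open>a \<in> S\<close> by (intro has_field_derivative_slope[OF assms(1,2) _ cont]) auto
  then show ?thesis using True by (simp add: divdiff_def DERIV_imp_deriv)
next
  case False
  then show ?thesis using slope[OF \<open>a \<in> S\<close> \<open>b \<in> S\<close>] by (simp add: divdiff_def)
qed

lemma deriv2_square_factor:
  fixes H H' :: "real \<Rightarrow> real"
  assumes "open S" "c \<in> S" and H': "\<And>t. t \<in> S \<Longrightarrow> (H has_real_derivative H' t) (at t)"
    and "isCont H' c"
  shows "deriv (deriv (\<lambda>t. (t - c)^2 * H t)) c = 2 * H c"
proof -
  define E where "E t = 2 * (t - c) * H t + (t - c)^2 * H' t" for t
  have "\<forall>\<^sub>F t in nhds c. deriv (\<lambda>t. (t - c)^2 * H t) t = E t"
    using eventually_nhds_in_open[OF assms(1,2)]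
  proof eventually_elim
    case (elim t)
    show ?case unfolding E_def
      by (rule DERIV_imp_deriv) (auto intro!: derivative_eq_intros H'[OF elim])
  qed
  then have "deriv (deriv (\<lambda>t. (t - c)^2 * H t)) c = deriv E c"
    by (rule deriv_cong_ev) simp
  also have "\<dots> = 2 * H c"
  proof (rule DERIV_imp_deriv, subst CARAT_DERIV, intro exI conjI allI)
    show "E z - E c = (2 * H z + (z - c) * H' z) * (z - c)" for z
      by (simp add: E_def power2_eq_square algebra_simps)
    have "isCont H c" using H'[OF \<open>c \<in> S\<close>] by (rule DERIV_isCont)
    then show "isCont (\<lambda>z. 2 * H z + (z - c) * H' z) c"
      using \<open>isCont H' c\<close> by (intro continuous_intros)
  qed simp
  finally show ?thesis .
qed

lemma concave_quadratic_le:
  fixes L s t :: real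
  assumes "0 < L"
  shows "- (L / 2) * s^2 + (t - 1) * s \<le> (t - 1)^2 / (2 * L)"
proof -
  have "(t - 1)^2 / (2 * L) - (- (L / 2) * s^2 + (t - 1) * s) = (L * s - (t - 1))^2 / (2 * L)"
    using assms by (simp add: field_simps power2_eq_square)
  moreover have "0 \<le> (L * s - (t - 1))^2 / (2 * L)"
    using assms by simp
  ultimately show ?thesis by linarith
qed

section \<open>Integral representation of h\<close>

definition mix :: "real \<Rightarrow> real \<Rightarrow> real" where
  "mix \<rho> t = \<rho> * t + 1 - \<rho>"

lemma mix_pos:
  assumes "0 \<le> \<rho>" "\<rho> \<le> 1" "0 < t"
  shows "0 < mix \<rho> t"
proof (cases "\<rho> = 0")
  case False
  with assms have "0 < \<rho> * t" by simp
  with \<open>\<rho> \<le> 1\<close> show ?thesis by (simp add: mix_def)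
qed (simp add: mix_def)

lemma mix_nonzero: "0 \<le> \<rho> \<Longrightarrow> \<rho> \<le> 1 \<Longrightarrow> 0 < t \<Longrightarrow> mix \<rho> t \<noteq> 0"
  using mix_pos by fastforce

lemma continuous_on_mix [continuous_intros]:
  "continuous_on S f \<Longrightarrow> continuous_on S g \<Longrightarrow> continuous_on S (\<lambda>x. mix (f x) (g x))"
  unfolding mix_def by (intro continuous_intros)

lemma borel_measurable_mix: "(\<lambda>\<rho>. mix \<rho> t) \<in> borel_measurable borel"
  unfolding mix_def by measurable

locale mixing_measure = prob_space \<nu> for \<nu> :: "real measure" +
  assumes sets_eq_borel: "sets \<nu> = sets borel"
    and AE_unit_interval: "AE \<rho> in \<nu>. 0 \<le> \<rho> \<and> \<rho> \<le> 1"
begin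

lemma borel_measurable_mixing: "g \<in> borel_measurable borel \<Longrightarrow> g \<in> borel_measurable \<nu>"
  using measurable_cong_sets[OF sets_eq_borel refl] by blast

lemma integrable_continuous_unit_interval:
  fixes g :: "real \<Rightarrow> real"
  assumes "continuous_on {0..1} g" "g \<in> borel_measurable borel"
  shows "integrable \<nu> g"
proof -
  have "bounded (g ` {0..1})"
    by (intro compact_imp_bounded compact_continuous_image assms(1) compact_Icc)
  then obtain B where B: "\<forall>y\<in>g ` {0..1}. norm y \<le> B"
    unfolding bounded_iff by blast
  show ?thesis
    by (rule integrable_const_bound[where B = B])
       (use AE_unit_interval B borel_measurable_mixing[OF assms(2)] in auto)
qed

lemma continuous_on_parametric_integral:
  fixes F :: "real \<Rightarrow> real \<Rightarrow> real"
  assumes "open S" and cont: "continuous_on ({0..1} \<times> S) (\<lambda>z. F (fst z) (snd z))"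
    and meas: "\<And>t. t \<in> S \<Longrightarrow> (\<lambda>\<rho>. F \<rho> t) \<in> borel_measurable borel"
  shows "continuous_on S (\<lambda>t. \<integral>\<rho>. F \<rho> t \<partial>\<nu>)"
proof -
  have compact_case: "continuous_on T (\<lambda>t. \<integral>\<rho>. F \<rho> t \<partial>\<nu>)" if "compact T" "T \<subseteq> S" for T
  proof -
    have "compact ({0..1::real} \<times> T)" using \<open>compact T\<close> by (intro compact_Times compact_Icc)
    moreover have "continuous_on ({0..1} \<times> T) (\<lambda>z. F (fst z) (snd z))"
      using cont by (rule continuous_on_subset) (use \<open>T \<subseteq> S\<close> in auto)
    ultimately have "bounded ((\<lambda>z. F (fst z) (snd z)) ` ({0..1} \<times> T))"
      by (intro compact_imp_bounded compact_continuous_image)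
    then obtain B where B: "\<forall>y\<in>(\<lambda>z. F (fst z) (snd z)) ` ({0..1} \<times> T). norm y \<le> B"
      unfolding bounded_iff by blast
    show ?thesis
    proof (rule continuous_on_sequentiallyI)
      fix x :: "nat \<Rightarrow> real" and t assume x: "\<forall>n. x n \<in> T" "t \<in> T" "x \<longlonglongrightarrow> t"
      show "(\<lambda>n. \<integral>\<rho>. F \<rho> (x n) \<partial>\<nu>) \<longlonglongrightarrow> (\<integral>\<rho>. F \<rho> t \<partial>\<nu>)"
      proof (rule integral_dominated_convergence[where w = "\<lambda>_. B"])
        show "AE \<rho> in \<nu>. (\<lambda>n. F \<rho> (x n)) \<longlonglongrightarrow> F \<rho> t"
          using AE_unit_interval
        proof eventually_elim
          case (elim \<rho>)
          have "continuous_on T (\<lambda>t. F \<rho> t)"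
            by (rule continuous_on_compose2[OF \<open>continuous_on ({0..1} \<times> T) _\<close>, where f = "Pair \<rho>",
                  simplified]) (use elim in \<open>auto intro: continuous_intros\<close>)
          then show ?case using x by (auto intro: continuous_on_tendsto_compose)
        qed
        show "AE \<rho> in \<nu>. norm (F \<rho> (x n)) \<le> B" for n
          using AE_unit_interval by eventually_elim (use B x in auto)
      qed (use x \<open>T \<subseteq> S\<close> meas borel_measurable_mixing in auto)
    qed
  qed
  show ?thesis
  proof (rule continuous_at_imp_continuous_on, rule ballI)
    fix t assume "t \<in> S"
    then obtain e where "0 < e" "cball t e \<subseteq> S"
      using \<open>open S\<close> open_contains_cball by blast
    then have "continuous_on (cball t e) (\<lambda>t. \<integral>\<rho>. F \<rho> t \<partial>\<nu>)"
      by (intro compact_case) auto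
    then show "isCont (\<lambda>t. \<integral>\<rho>. F \<rho> t \<partial>\<nu>) t"
      by (rule continuous_on_interior) (simp add: \<open>0 < e\<close>)
  qed
qed

lemma integral_cong_unit_interval:
  fixes f g :: "real \<Rightarrow> real"
  assumes "\<And>\<rho>. 0 \<le> \<rho> \<Longrightarrow> \<rho> \<le> 1 \<Longrightarrow> f \<rho> = g \<rho>"
    and "f \<in> borel_measurable borel" "g \<in> borel_measurable borel"
  shows "integral\<^sup>L \<nu> f = integral\<^sup>L \<nu> g"
  by (rule integral_cong_AE) (use assms AE_unit_interval borel_measurable_mixing in auto)

lemma integrable_mix_quotient:
  fixes u :: "real \<Rightarrow> real"
  assumes "continuous_on {0..1} u" "u \<in> borel_measurable borel" "0 < a" "0 < b"
  shows "integrable \<nu> (\<lambda>\<rho>. u \<rho> / (2 * mix \<rho> a * mix \<rho> b))"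
  using assms
  by (intro integrable_continuous_unit_interval)
     (auto intro!: continuous_intros simp: mix_nonzero, simp add: mix_def)

lemma isCont_mix_kernel:
  fixes u g :: "real \<Rightarrow> real"
  assumes "continuous_on {0..1} u" "u \<in> borel_measurable borel"
    and "continuous_on {0<..} g" "\<And>x. 0 < x \<Longrightarrow> 0 < g x" and "0 < y"
  shows "isCont (\<lambda>x. \<integral>\<rho>. u \<rho> / (2 * mix \<rho> x * mix \<rho> (g x)) \<partial>\<nu>) y"
proof -
  have "continuous_on {0<..} (\<lambda>x. \<integral>\<rho>. u \<rho> / (2 * mix \<rho> x * mix \<rho> (g x)) \<partial>\<nu>)"
  proof (rule continuous_on_parametric_integral)
    have "continuous_on ({0..1} \<times> {0<..}) (\<lambda>z. u (fst z))"
      by (rule continuous_on_compose2[OF assms(1)]) (auto intro: continuous_intros)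
    moreover have "continuous_on ({0..1} \<times> {0<..}) (\<lambda>z. g (snd z))"
      by (rule continuous_on_compose2[OF assms(3)]) (auto intro: continuous_intros)
    ultimately show "continuous_on ({0..1} \<times> {0<..})
        (\<lambda>z. u (fst z) / (2 * mix (fst z) (snd z) * mix (fst z) (g (snd z))))"
      using assms(4) by (auto intro!: continuous_intros simp: mix_nonzero)
  qed (use assms(2) in \<open>auto simp: mix_def\<close>)
  then show ?thesis
    using \<open>0 < y\<close> by (simp add: continuous_on_eq_continuous_at)
qed

definition h_integral :: "real \<Rightarrow> real" where
  "h_integral t = (\<integral>\<rho>. 1 / (2 * mix \<rho> t) \<partial>\<nu>)"

lemma fgen_eq_h_integral: "fgen \<nu> t = (t - 1)^2 * h_integral t"
proof -
  have "fgen \<nu> t = (\<integral>\<rho>. (t - 1)^2 * (1 / (2 * mix \<rho> t)) \<partial>\<nu>)"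
    unfolding fgen_def mix_def by (rule Bochner_Integration.integral_cong) auto
  then show ?thesis by (simp only: integral_mult_right_zero h_integral_def)
qed

lemma integrable_h_integrand: "0 < t \<Longrightarrow> integrable \<nu> (\<lambda>\<rho>. 1 / (2 * mix \<rho> t))"
  by (intro integrable_continuous_unit_interval)
     (auto intro!: continuous_intros simp: mix_nonzero, simp add: mix_def)

lemma h_integral_slope:
  assumes "0 < x" "0 < y"
  shows "h_integral x - h_integral y = (x - y) * (\<integral>\<rho>. - \<rho> / (2 * mix \<rho> x * mix \<rho> y) \<partial>\<nu>)"
proof -
  have "h_integral x - h_integral y = (\<integral>\<rho>. 1 / (2 * mix \<rho> x) - 1 / (2 * mix \<rho> y) \<partial>\<nu>)"
    unfolding h_integral_def using assms by (simp add: integrable_h_integrand)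
  also have "\<dots> = (\<integral>\<rho>. (x - y) * (- \<rho> / (2 * mix \<rho> x * mix \<rho> y)) \<partial>\<nu>)"
  proof (rule integral_cong_unit_interval)
    fix \<rho> :: real assume "0 \<le> \<rho>" "\<rho> \<le> 1"
    with assms have "mix \<rho> x \<noteq> 0" "mix \<rho> y \<noteq> 0" by (auto simp: mix_nonzero)
    then show "1 / (2 * mix \<rho> x) - 1 / (2 * mix \<rho> y) = (x - y) * (- \<rho> / (2 * mix \<rho> x * mix \<rho> y))"
      by (simp add: field_simps) (simp add: mix_def algebra_simps)
  qed (auto simp: mix_def)
  finally show ?thesis by (simp only: integral_mult_right_zero)
qed

lemma lh_integral_slope:
  assumes "0 < x" "0 < y"
  shows "x * h_integral x - y * h_integral y = (x - y) * (\<integral>\<rho>. (1 - \<rho>) / (2 * mix \<rho> x * mix \<rho> y) \<partial>\<nu>)"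
proof -
  have "x * h_integral x - y * h_integral y
      = (\<integral>\<rho>. x * (1 / (2 * mix \<rho> x)) \<partial>\<nu>) - (\<integral>\<rho>. y * (1 / (2 * mix \<rho> y)) \<partial>\<nu>)"
    by (simp only: h_integral_def integral_mult_right_zero)
  also have "\<dots> = (\<integral>\<rho>. x * (1 / (2 * mix \<rho> x)) - y * (1 / (2 * mix \<rho> y)) \<partial>\<nu>)"
    by (rule Bochner_Integration.integral_diff[symmetric])
       (intro integrable_mult_right integrable_h_integrand assms)+
  also have "\<dots> = (\<integral>\<rho>. (x - y) * ((1 - \<rho>) / (2 * mix \<rho> x * mix \<rho> y)) \<partial>\<nu>)"
  proof (rule integral_cong_unit_interval)
    fix \<rho> :: real assume "0 \<le> \<rho>" "\<rho> \<le> 1"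
    with assms have "mix \<rho> x \<noteq> 0" "mix \<rho> y \<noteq> 0" by (auto simp: mix_nonzero)
    then show "x * (1 / (2 * mix \<rho> x)) - y * (1 / (2 * mix \<rho> y)) = (x - y) * ((1 - \<rho>) / (2 * mix \<rho> x * mix \<rho> y))"
      by (simp add: field_simps) (simp add: mix_def algebra_simps)
  qed (auto simp: mix_def)
  finally show ?thesis by (simp only: integral_mult_right_zero)
qed

lemma h_integral_has_derivative:
  assumes "0 < t"
  shows "(h_integral has_real_derivative (\<integral>\<rho>. - \<rho> / (2 * mix \<rho> t * mix \<rho> t) \<partial>\<nu>)) (at t)"
proof (rule has_field_derivative_slope[where S = "{0<..}"
      and G = "\<lambda>x. \<integral>\<rho>. - \<rho> / (2 * mix \<rho> x * mix \<rho> t) \<partial>\<nu>"])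
  show "isCont (\<lambda>x. \<integral>\<rho>. - \<rho> / (2 * mix \<rho> x * mix \<rho> t) \<partial>\<nu>) t"
    using assms by (intro isCont_mix_kernel continuous_intros) auto
qed (use assms h_integral_slope in auto)

lemma hfun_eq_h_integral:
  assumes "0 < t"
  shows "hfun \<nu> t = h_integral t"
proof (cases "t = 1")
  case True
  have "fgen \<nu> = (\<lambda>t. (t - 1)^2 * h_integral t)"
    by (rule ext) (rule fgen_eq_h_integral)
  then have "deriv (deriv (fgen \<nu>)) 1 = deriv (deriv (\<lambda>t. (t - 1)^2 * h_integral t)) 1"
    by simp
  also have "\<dots> = 2 * h_integral 1"
  proof (rule deriv2_square_factor[where S = "{0<..}"])
    show "(h_integral has_real_derivative (\<integral>\<rho>. - \<rho> / (2 * mix \<rho> t * mix \<rho> t) \<partial>\<nu>)) (at t)"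
      if "t \<in> {0<..}" for t
      using that by (intro h_integral_has_derivative) simp
    show "isCont (\<lambda>t. \<integral>\<rho>. - \<rho> / (2 * mix \<rho> t * mix \<rho> t) \<partial>\<nu>) 1"
      by (intro isCont_mix_kernel continuous_intros) auto
  qed auto
  finally show ?thesis using True by (simp add: hfun_def)
qed (simp add: hfun_def fgen_eq_h_integral)

lemma divdiff_hfun:
  assumes "0 < a" "0 < b"
  shows "divdiff (hfun \<nu>) a b = (\<integral>\<rho>. - \<rho> / (2 * mix \<rho> a * mix \<rho> b) \<partial>\<nu>)"
proof (rule divdiff_eq_slope_kernel[where S = "{0<..}"])
  show "isCont (\<lambda>x. \<integral>\<rho>. - \<rho> / (2 * mix \<rho> x * mix \<rho> a) \<partial>\<nu>) a"
    using assms by (intro isCont_mix_kernel continuous_intros) auto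
qed (use assms in \<open>auto simp: hfun_eq_h_integral h_integral_slope\<close>)

lemma divdiff_lhfun:
  assumes "0 < a" "0 < b"
  shows "divdiff (\<lambda>l. l * hfun \<nu> l) a b = (\<integral>\<rho>. (1 - \<rho>) / (2 * mix \<rho> a * mix \<rho> b) \<partial>\<nu>)"
proof (rule divdiff_eq_slope_kernel[where S = "{0<..}"])
  show "isCont (\<lambda>x. \<integral>\<rho>. (1 - \<rho>) / (2 * mix \<rho> x * mix \<rho> a) \<partial>\<nu>) a"
    using assms by (intro isCont_mix_kernel continuous_intros) auto
qed (use assms in \<open>auto simp: hfun_eq_h_integral lh_integral_slope\<close>)

lemma divdiff_combination_integral:
  assumes "0 < a" "0 < b"
  shows "t * divdiff (hfun \<nu>) a b - divdiff (\<lambda>l. l * hfun \<nu> l) a b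
    = - (\<integral>\<rho>. mix \<rho> t / (2 * mix \<rho> a * mix \<rho> b) \<partial>\<nu>)"
proof -
  have "t * divdiff (hfun \<nu>) a b - divdiff (\<lambda>l. l * hfun \<nu> l) a b
      = (\<integral>\<rho>. t * (- \<rho> / (2 * mix \<rho> a * mix \<rho> b)) \<partial>\<nu>)
        - (\<integral>\<rho>. (1 - \<rho>) / (2 * mix \<rho> a * mix \<rho> b) \<partial>\<nu>)"
    by (simp only: divdiff_hfun[OF assms] divdiff_lhfun[OF assms] integral_mult_right_zero)
  also have "\<dots> = (\<integral>\<rho>. t * (- \<rho> / (2 * mix \<rho> a * mix \<rho> b)) - (1 - \<rho>) / (2 * mix \<rho> a * mix \<rho> b) \<partial>\<nu>)"
    using assms
    by (intro Bochner_Integration.integral_diff[symmetric] integrable_mult_right integrable_mix_quotient)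
       (auto intro: continuous_intros)
  also have "\<dots> = (\<integral>\<rho>. - (mix \<rho> t / (2 * mix \<rho> a * mix \<rho> b)) \<partial>\<nu>)"
    by (rule Bochner_Integration.integral_cong)
       (simp_all add: mix_def diff_divide_distrib[symmetric] add_divide_distrib[symmetric] algebra_simps)
  finally show ?thesis by simp
qed

lemma divdiff_combination_diagonal:
  assumes "0 < a"
  shows "a * divdiff (hfun \<nu>) a a - divdiff (\<lambda>l. l * hfun \<nu> l) a a = - hfun \<nu> a"
proof -
  have "(\<integral>\<rho>. mix \<rho> a / (2 * mix \<rho> a * mix \<rho> a) \<partial>\<nu>) = h_integral a"
    unfolding h_integral_def
    by (rule integral_cong_unit_interval) (use assms in \<open>auto simp: mix_nonzero mix_def\<close>)
  then show ?thesis
    using assms by (simp add: divdiff_combination_integral hfun_eq_h_integral)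
qed

lemma certificate_pairing_le_fgen:
  fixes a y :: "'i \<Rightarrow> real"
  assumes "finite I" and a: "\<And>i. i \<in> I \<Longrightarrow> 0 < a i" and "0 < t"
  shows "(\<Sum>i\<in>I. \<Sum>j\<in>I. (t * divdiff (hfun \<nu>) (a i) (a j) - divdiff (\<lambda>l. l * hfun \<nu> l) (a i) (a j))
             * y i * y j)
         + 2 * (t - 1) * (\<Sum>i\<in>I. hfun \<nu> (a i) * y i) \<le> fgen \<nu> t"
proof -
  define A where "A i j = (\<lambda>\<rho>. mix \<rho> t / (2 * mix \<rho> (a i) * mix \<rho> (a j)))" for i j
  define B where "B i = (\<lambda>\<rho>. 1 / (2 * mix \<rho> (a i)))" for i
  define \<Phi> where "\<Phi> = (\<lambda>\<rho>. (\<Sum>i\<in>I. \<Sum>j\<in>I. (- y i * y j) * A i j \<rho>)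
      + (\<Sum>i\<in>I. (2 * (t - 1) * y i) * B i \<rho>))"
  have int_A: "integrable \<nu> (A i j)" if "i \<in> I" "j \<in> I" for i j
    unfolding A_def using a that
    by (intro integrable_mix_quotient continuous_intros borel_measurable_mix) auto
  have int_B: "integrable \<nu> (B i)" if "i \<in> I" for i
    unfolding B_def using a that by (intro integrable_h_integrand) auto
  have "(\<Sum>i\<in>I. \<Sum>j\<in>I. (t * divdiff (hfun \<nu>) (a i) (a j) - divdiff (\<lambda>l. l * hfun \<nu> l) (a i) (a j))
             * y i * y j)
         + 2 * (t - 1) * (\<Sum>i\<in>I. hfun \<nu> (a i) * y i)
      = (\<Sum>i\<in>I. \<Sum>j\<in>I. (- y i * y j) * integral\<^sup>L \<nu> (A i j))
         + (\<Sum>i\<in>I. (2 * (t - 1) * y i) * integral\<^sup>L \<nu> (B i))"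
    using a
    by (simp add: A_def B_def divdiff_combination_integral hfun_eq_h_integral h_integral_def
        sum_distrib_left mult_ac)
  also have "\<dots> = integral\<^sup>L \<nu> \<Phi>"
    unfolding \<Phi>_def using int_A int_B by (simp add: Bochner_Integration.integral_sum Bochner_Integration.integrable_sum)
  also have "\<dots> \<le> (\<integral>\<rho>. (1/2) * (t - 1)^2 / (\<rho> * t + 1 - \<rho>) \<partial>\<nu>)"
  proof (rule integral_mono_AE)
    show "integrable \<nu> \<Phi>"
      unfolding \<Phi>_def using int_A int_B by (simp add: Bochner_Integration.integrable_sum)
    have "integrable \<nu> (\<lambda>\<rho>. (t - 1)^2 * (1 / (2 * mix \<rho> t)))"
      using integrable_h_integrand[OF \<open>0 < t\<close>] by (rule integrable_mult_right)
    then show "integrable \<nu> (\<lambda>\<rho>. (1/2) * (t - 1)^2 / (\<rho> * t + 1 - \<rho>))"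
      by (simp add: mix_def)
    show "AE \<rho> in \<nu>. \<Phi> \<rho> \<le> (1/2) * (t - 1)^2 / (\<rho> * t + 1 - \<rho>)"
      using AE_unit_interval
    proof eventually_elim
      case (elim \<rho>)
      define s where "s = (\<Sum>i\<in>I. y i / mix \<rho> (a i))"
      have "s^2 = (\<Sum>i\<in>I. \<Sum>j\<in>I. (y i / mix \<rho> (a i)) * (y j / mix \<rho> (a j)))"
        unfolding s_def power2_eq_square by (rule sum_product)
      then have "- (mix \<rho> t / 2) * s^2
          = (\<Sum>i\<in>I. \<Sum>j\<in>I. - (mix \<rho> t / 2) * ((y i / mix \<rho> (a i)) * (y j / mix \<rho> (a j))))"
        by (simp only: sum_distrib_left)
      also have "\<dots> = (\<Sum>i\<in>I. \<Sum>j\<in>I. (- y i * y j) * A i j \<rho>)"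
        unfolding A_def by (intro sum.cong refl) (simp add: algebra_simps)
      finally have "(\<Sum>i\<in>I. \<Sum>j\<in>I. (- y i * y j) * A i j \<rho>) = - (mix \<rho> t / 2) * s^2" ..
      moreover have "(\<Sum>i\<in>I. (2 * (t - 1) * y i) * B i \<rho>) = (t - 1) * s"
        unfolding s_def sum_distrib_left B_def using a elim
        by (intro sum.cong refl) (simp add: mix_nonzero field_simps)
      ultimately have "\<Phi> \<rho> = - (mix \<rho> t / 2) * s^2 + (t - 1) * s"
        by (simp add: \<Phi>_def)
      also have "\<dots> \<le> (t - 1)^2 / (2 * mix \<rho> t)"
        using elim \<open>0 < t\<close> by (intro concave_quadratic_le mix_pos) auto
      finally show ?case by (simp add: mix_def)
    qed
  qed
  also have "\<dots> = fgen \<nu> t"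
    by (simp add: fgen_def)
  finally show ?thesis .
qed

end

section \<open>Diagonalising the pencil\<close>

lemma outer_matrix_vector_mult: "outer x y *v z = (y \<bullet> z) *\<^sub>R (x :: real^'m)"
  by (simp add: vec_eq_iff outer_def matrix_vector_mult_def inner_vec_def sum_distrib_left
      sum_distrib_right mult_ac)

lemma outer_scaleR_left: "outer (c *\<^sub>R x) y = c *\<^sub>R outer (x :: real^'m) y"
  by (simp add: vec_eq_iff outer_def)

lemma matrix_mult_outer: "A ** outer x y = outer (A *v x) (y :: real^'m)"
  by (simp add: vec_eq_iff matrix_matrix_mult_def matrix_vector_mult_def outer_def
      sum_distrib_right mult.assoc)

lemma sum_matrix_vector_mult: "sum A I *v (x :: real^'m) = (\<Sum>i\<in>I. A i *v x)"
  by (induction I rule: infinite_finite_induct) (simp_all add: matrix_vector_mult_add_rdistrib)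

lemma matrix_mult_sum_right: "(A :: real^'m^'m) ** sum B I = (\<Sum>i\<in>I. A ** B i)"
  by (induction I rule: infinite_finite_induct) (simp_all add: matrix_add_ldistrib)

lemma matrix_mult_scaleR_right: "(A :: real^'m^'m) ** (c *\<^sub>R B) = c *\<^sub>R (A ** B)"
  by (simp add: vec_eq_iff matrix_matrix_mult_def sum_distrib_left mult.left_commute)

lemma quadratic_form_sum_outer:
  "(x :: real^'m) \<bullet> ((\<Sum>i\<in>I. \<Sum>j\<in>J. f i j *\<^sub>R outer (U i) (W j)) *v x)
     = (\<Sum>i\<in>I. \<Sum>j\<in>J. f i j * ((x \<bullet> U i) * (W j \<bullet> x)))"
  by (simp add: sum_matrix_vector_mult scaleR_matrix_vector_assoc[symmetric] outer_matrix_vector_mult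
      inner_sum_right mult_ac)

lemma matrix_inv_eq:
  fixes A B :: "real^'m^'m"
  assumes "A ** B = mat 1"
  shows "matrix_inv A = B"
  unfolding matrix_inv_def
proof (rule some_equality)
  fix B' assume B': "A ** B' = mat 1 \<and> B' ** A = mat 1"
  have "B' = B' ** (A ** B)"
    using assms by simp
  also have "\<dots> = (B' ** A) ** B"
    by (simp add: matrix_mul_assoc)
  finally show "B' = B"
    using B' by simp
qed (use assms matrix_left_right_inverse in blast)

lemma biorthogonal_resolution_of_identity:
  fixes S :: "real^'m^'m" and V :: "'m \<Rightarrow> real^'m"
  assumes orth: "\<And>i j. V i \<bullet> (S *v V j) = (if i = j then 1 else 0)"
  shows "S ** (\<Sum>i\<in>UNIV. outer (V i) (V i)) = mat 1"
proof -
  define W :: "real^'m^'m" where "W = (\<chi> k j. V j $ k)"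
  have col: "(A ** W) $ i $ j = (A *v V j) $ i" for A :: "real^'m^'m" and i j
    by (simp add: W_def matrix_matrix_mult_def matrix_vector_mult_def)
  have row: "(transpose W *v z) $ i = V i \<bullet> z" for z i
    by (simp add: W_def transpose_def matrix_vector_mult_def inner_vec_def)
  have "((transpose W ** S) ** W) $ i $ j = V i \<bullet> (S *v V j)" for i j
    using col[of "transpose W ** S" i j] row[of "S *v V j" i]
    by (simp add: matrix_vector_mul_assoc[symmetric])
  then have "(transpose W ** S) ** W = mat 1"
    using orth by (simp add: vec_eq_iff mat_def)
  then have "W ** (transpose W ** S) = mat 1"
    by (simp add: matrix_left_right_inverse)
  then have "(W ** transpose W) ** S = mat 1"
    by (simp add: matrix_mul_assoc)
  then have "S ** (W ** transpose W) = mat 1"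
    by (simp add: matrix_left_right_inverse)
  moreover have "W ** transpose W = (\<Sum>i\<in>UNIV. outer (V i) (V i))"
    by (simp add: vec_eq_iff W_def outer_def matrix_matrix_mult_def transpose_def sum_component)
  ultimately show ?thesis by simp
qed

lemma matrix_inv_pencil:
  fixes Sp Sq :: "real^'m^'m" and V :: "'m \<Rightarrow> real^'m"
  assumes orth: "\<And>i j. V i \<bullet> (Sq *v V j) = (if i = j then 1 else 0)"
    and eig: "\<And>i. Sp *v V i = lam i *\<^sub>R (Sq *v V i)"
    and nonzero: "\<And>i. mix \<rho> (lam i) \<noteq> 0"
  shows "matrix_inv (\<rho> *\<^sub>R Sp + (1 - \<rho>) *\<^sub>R Sq)
          = (\<Sum>i\<in>UNIV. (1 / mix \<rho> (lam i)) *\<^sub>R outer (V i) (V i))"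
proof (rule matrix_inv_eq)
  have "(\<rho> *\<^sub>R Sp + (1 - \<rho>) *\<^sub>R Sq) *v V i = mix \<rho> (lam i) *\<^sub>R (Sq *v V i)" for i
    by (simp add: matrix_vector_mult_add_rdistrib scaleR_matrix_vector_assoc[symmetric] eig
        mix_def algebra_simps)
  then have "(\<rho> *\<^sub>R Sp + (1 - \<rho>) *\<^sub>R Sq) ** (\<Sum>i\<in>UNIV. (1 / mix \<rho> (lam i)) *\<^sub>R outer (V i) (V i))
      = Sq ** (\<Sum>i\<in>UNIV. outer (V i) (V i))"
    using nonzero
    by (simp add: matrix_mult_sum_right matrix_mult_scaleR_right matrix_mult_outer outer_scaleR_left)
  also have "\<dots> = mat 1"
    by (rule biorthogonal_resolution_of_identity[OF orth])
  finally show "(\<rho> *\<^sub>R Sp + (1 - \<rho>) *\<^sub>R Sq) ** (\<Sum>i\<in>UNIV. (1 / mix \<rho> (lam i)) *\<^sub>R outer (V i) (V i))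
      = mat 1" .
qed

context mixing_measure
begin

lemma Fdiv_eq_eigen_sum:
  fixes p q :: "'a measure" and \<phi> :: "'a \<Rightarrow> real^'m" and V :: "'m \<Rightarrow> real^'m"
  assumes orth: "\<And>i j. V i \<bullet> (second_moment q \<phi> *v V j) = (if i = j then 1 else 0)"
    and eig: "\<And>i. second_moment p \<phi> *v V i = lam i *\<^sub>R (second_moment q \<phi> *v V i)"
    and pos: "\<And>i. 0 < lam i"
  shows "Fdiv \<nu> p q \<phi> = (\<Sum>i\<in>UNIV. hfun \<nu> (lam i) * ((mean_vec p \<phi> - mean_vec q \<phi>) \<bullet> V i)^2)"
proof -
  define d where "d = mean_vec p \<phi> - mean_vec q \<phi>"
  define f where "f = (\<lambda>\<rho>. d \<bullet> (matrix_inv (\<rho> *\<^sub>R second_moment p \<phi> + (1 - \<rho>) *\<^sub>R second_moment q \<phi>) *v d))"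
  define g where "g \<rho> = (\<Sum>i\<in>UNIV. (2 * (d \<bullet> V i)^2) * (1 / (2 * mix \<rho> (lam i))))" for \<rho>
  have f_eq_g: "f \<rho> = g \<rho>" if "\<And>i. mix \<rho> (lam i) \<noteq> 0" for \<rho>
    unfolding f_def g_def matrix_inv_pencil[OF orth eig that]
    by (simp add: sum_matrix_vector_mult scaleR_matrix_vector_assoc[symmetric] outer_matrix_vector_mult
        inner_sum_right power2_eq_square inner_commute)
  have "{\<rho>. \<exists>i. mix \<rho> (lam i) = 0} \<subseteq> range (\<lambda>i. 1 / (1 - lam i))"
  proof
    fix \<rho> assume "\<rho> \<in> {\<rho>. \<exists>i. mix \<rho> (lam i) = 0}"
    then obtain i where "mix \<rho> (lam i) = 0" by blast
    then have "\<rho> * (1 - lam i) = 1"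
      unfolding mix_def right_diff_distrib mult_1_right by linarith
    then have "\<rho> = 1 / (1 - lam i)"
      by (metis mult_eq_0_iff nonzero_eq_divide_eq zero_neq_one)
    then show "\<rho> \<in> range (\<lambda>i. 1 / (1 - lam i))" by blast
  qed
  then have countable_singular: "countable {\<rho>. \<exists>i. mix \<rho> (lam i) = 0}"
    by (rule countable_subset) simp
  have g_measurable: "g \<in> borel_measurable borel"
    unfolding g_def mix_def by measurable
  \<comment> \<open>\<open>matrix_inv\<close> of a singular pencil is an unspecified \<open>SOME\<close> value, so measurability of
    \<open>f\<close> comes from agreeing with \<open>g\<close> off the countably many singular \<open>\<rho>\<close>.\<close>
  have "f \<in> borel_measurable borel"
    by (rule measurable_discrete_difference[OF g_measurable countable_singular])
       (auto simp: f_eq_g)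
  then have "integral\<^sup>L \<nu> f = integral\<^sup>L \<nu> g"
    using g_measurable pos
    by (intro integral_cong_unit_interval f_eq_g) (auto simp: mix_nonzero)
  also have "\<dots> = (\<Sum>i\<in>UNIV. (2 * (d \<bullet> V i)^2) * h_integral (lam i))"
  proof -
    have "integrable \<nu> (\<lambda>\<rho>. (2 * (d \<bullet> V i)^2) * (1 / (2 * mix \<rho> (lam i))))" for i
      using pos by (intro integrable_mult_right integrable_h_integrand)
    then show ?thesis
      unfolding g_def h_integral_def
      by (subst Bochner_Integration.integral_sum) (simp_all only: integral_mult_right_zero)
  qed
  finally show ?thesis
    using pos by (simp add: Fdiv_def Let_def f_def d_def sum_distrib_left hfun_eq_h_integral mult_ac)
qed

end

lemma integrable_euclidean_componentwise:
  fixes f :: "'a \<Rightarrow> 'b::euclidean_space"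
  assumes "\<And>b. b \<in> Basis \<Longrightarrow> integrable M (\<lambda>x. f x \<bullet> b)"
  shows "integrable M f"
proof -
  have "integrable M (\<lambda>x. \<Sum>b\<in>Basis. (f x \<bullet> b) *\<^sub>R b)"
    using assms by (intro Bochner_Integration.integrable_sum integrable_scaleR_left) auto
  then show ?thesis by (simp add: euclidean_representation)
qed

lemma abs_le_one_plus_square: "\<bar>t::real\<bar> \<le> 1 + t * t"
  using zero_le_square[of "\<bar>t\<bar> - 1"] abs_mult_self_eq[of t] by (simp add: algebra_simps)

lemma inner_mult_inner_eq_outer: "(z \<bullet> a) * (b \<bullet> z) = a \<bullet> (outer z z *v b)"
  by (simp add: outer_matrix_vector_mult inner_commute)

lemma bounded_linear_matrix_bilinear_form: "bounded_linear (\<lambda>A::real^'m^'m. a \<bullet> (A *v b))"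
  by (rule bounded_linearI')
     (simp_all add: matrix_vector_mult_add_rdistrib scaleR_matrix_vector_assoc[symmetric]
       inner_add_right)

locale finite_second_moments = prob_space p for p :: "'a measure" +
  fixes \<phi> :: "'a \<Rightarrow> real^'m"
  assumes borel_measurable_feature: "\<phi> \<in> borel_measurable p"
    and integrable_feature_products: "\<And>i j. integrable p (\<lambda>x. \<phi> x $ i * \<phi> x $ j)"
begin

lemma integrable_feature: "integrable p \<phi>"
proof (rule integrable_euclidean_componentwise)
  fix b :: "real^'m" assume "b \<in> Basis"
  then obtain i where b: "b = axis i 1" by (auto simp: Basis_vec_def)
  have "integrable p (\<lambda>x. \<phi> x $ i)"
  proof (rule Bochner_Integration.integrable_bound)
    show "integrable p (\<lambda>x. 1 + \<phi> x $ i * \<phi> x $ i)"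
      using integrable_feature_products by simp
    show "(\<lambda>x. \<phi> x $ i) \<in> borel_measurable p"
      by (rule measurable_compose[OF borel_measurable_feature borel_measurable_continuous_onI])
         (rule linear_continuous_on[OF bounded_linear_vec_nth])
    show "AE x in p. norm (\<phi> x $ i) \<le> norm (1 + \<phi> x $ i * \<phi> x $ i)"
      by (intro AE_I2) (metis abs_le_one_plus_square abs_ge_self order_trans real_norm_def)
  qed
  then show "integrable p (\<lambda>x. \<phi> x \<bullet> b)"
    by (simp add: b inner_axis)
qed

lemma integral_inner_feature: "(\<integral>x. c \<bullet> \<phi> x \<partial>p) = c \<bullet> mean_vec p \<phi>"
  using integrable_feature by (simp add: mean_vec_def)

lemma integrable_outer_feature: "integrable p (\<lambda>x. outer (\<phi> x) (\<phi> x))"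
proof (rule integrable_euclidean_componentwise)
  fix b :: "real^'m^'m" assume "b \<in> Basis"
  then obtain i j where "b = axis i (axis j 1)" by (auto simp: Basis_vec_def)
  then show "integrable p (\<lambda>x. outer (\<phi> x) (\<phi> x) \<bullet> b)"
    using integrable_feature_products[of i j] by (simp add: inner_axis outer_def)
qed

lemma integrable_quadratic_feature: "integrable p (\<lambda>x. (\<phi> x \<bullet> a) * (b \<bullet> \<phi> x))"
  unfolding inner_mult_inner_eq_outer
  by (rule integrable_bounded_linear[OF bounded_linear_matrix_bilinear_form integrable_outer_feature])

lemma integral_quadratic_feature:
  "(\<integral>x. (\<phi> x \<bullet> a) * (b \<bullet> \<phi> x) \<partial>p) = a \<bullet> (second_moment p \<phi> *v b)"
  unfolding inner_mult_inner_eq_outer second_moment_def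
  by (rule integral_bounded_linear[OF bounded_linear_matrix_bilinear_form integrable_outer_feature])

lemma integral_quadratic_form_eigenbasis:
  fixes V :: "'i::finite \<Rightarrow> real^'m"
  assumes "\<And>i j. V i \<bullet> (second_moment p \<phi> *v V j) = (if i = j then \<mu> i else 0)"
  shows "(\<integral>x. (\<Sum>i\<in>UNIV. \<Sum>j\<in>UNIV. c i j * ((\<phi> x \<bullet> V i) * (V j \<bullet> \<phi> x))) \<partial>p)
    = (\<Sum>i\<in>UNIV. c i i * \<mu> i)"
  using assms
  by (simp add: integrable_quadratic_feature integral_quadratic_feature Bochner_Integration.integral_sum
      if_distrib[of "times _"] cong: if_cong)

end

section \<open>The dual certificate\<close>

lemma le_neg_fconj:
  assumes "\<And>t. 0 < t \<Longrightarrow> u * t + w \<le> fgen \<nu> t"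
  shows "ereal w \<le> - fconj \<nu> u"
proof -
  have "fconj \<nu> u \<le> ereal (- w)"
    unfolding fconj_def
  proof (rule SUP_least)
    fix t :: real assume "t \<in> {0<..}"
    then have "u * t + w \<le> fgen \<nu> t" using assms by simp
    then show "ereal (u * t - fgen \<nu> t) \<le> ereal (- w)" by simp
  qed
  then show ?thesis
    by (metis ereal_minus_le_minus ereal_uminus_uminus uminus_ereal.simps(1))
qed

lemma uminus_matrix_vector_mult: "(- A) *v x = - (A *v (x :: real^'m))"
  by (simp add: vec_eq_iff matrix_vector_mult_def sum_negf)

lemma inner_Mmat:
  "z \<bullet> (Mmat \<nu> d V lam *v z) = (\<Sum>i\<in>UNIV. \<Sum>j\<in>UNIV.
     ((d \<bullet> V i) * (V j \<bullet> d) * divdiff (hfun \<nu>) (lam i) (lam j)) * ((z \<bullet> V i) * (V j \<bullet> z)))"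
  unfolding Mmat_def by (rule quadratic_form_sum_outer)

lemma inner_Nmat:
  "z \<bullet> (Nmat \<nu> d V lam *v z) = - (\<Sum>i\<in>UNIV. \<Sum>j\<in>UNIV.
     ((d \<bullet> V i) * (V j \<bullet> d) * divdiff (\<lambda>l. l * hfun \<nu> l) (lam i) (lam j)) * ((z \<bullet> V i) * (V j \<bullet> z)))"
  unfolding Nmat_def uminus_matrix_vector_mult inner_minus_right quadratic_form_sum_outer ..

lemma cvec_inner: "cvec \<nu> d V lam \<bullet> z = (\<Sum>i\<in>UNIV. hfun \<nu> (lam i) * (V i \<bullet> d) * (V i \<bullet> z))"
  by (simp add: cvec_def inner_sum_left)

context mixing_measure
begin

lemma certificate_feasible:
  assumes pos: "\<And>i. 0 < lam i"
  shows "ereal (z \<bullet> (Nmat \<nu> d V lam *v z) - 2 * (cvec \<nu> d V lam \<bullet> z))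
    \<le> - fconj \<nu> (z \<bullet> (Mmat \<nu> d V lam *v z) + 2 * (cvec \<nu> d V lam \<bullet> z))"
proof (rule le_neg_fconj)
  fix t :: real assume "0 < t"
  define y where "y i = (d \<bullet> V i) * (z \<bullet> V i)" for i
  have v: "z \<bullet> (Mmat \<nu> d V lam *v z) + 2 * (cvec \<nu> d V lam \<bullet> z)
      = (\<Sum>i\<in>UNIV. \<Sum>j\<in>UNIV. divdiff (hfun \<nu>) (lam i) (lam j) * y i * y j)
        + 2 * (\<Sum>i\<in>UNIV. hfun \<nu> (lam i) * y i)"
    unfolding inner_Mmat cvec_inner y_def by (simp add: inner_commute mult_ac)
  have w: "z \<bullet> (Nmat \<nu> d V lam *v z) - 2 * (cvec \<nu> d V lam \<bullet> z)
      = - (\<Sum>i\<in>UNIV. \<Sum>j\<in>UNIV. divdiff (\<lambda>l. l * hfun \<nu> l) (lam i) (lam j) * y i * y j)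
        - 2 * (\<Sum>i\<in>UNIV. hfun \<nu> (lam i) * y i)"
    unfolding inner_Nmat cvec_inner y_def by (simp add: inner_commute mult_ac)
  have "(z \<bullet> (Mmat \<nu> d V lam *v z) + 2 * (cvec \<nu> d V lam \<bullet> z)) * t
        + (z \<bullet> (Nmat \<nu> d V lam *v z) - 2 * (cvec \<nu> d V lam \<bullet> z))
      = (\<Sum>i\<in>UNIV. \<Sum>j\<in>UNIV.
           (t * divdiff (hfun \<nu>) (lam i) (lam j) - divdiff (\<lambda>l. l * hfun \<nu> l) (lam i) (lam j)) * y i * y j)
        + 2 * (t - 1) * (\<Sum>i\<in>UNIV. hfun \<nu> (lam i) * y i)"
    unfolding v w
    by (simp add: sum_distrib_left sum_distrib_right sum_subtractf algebra_simps)
  also have "\<dots> \<le> fgen \<nu> t"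
    using pos \<open>0 < t\<close> by (intro certificate_pairing_le_fgen) auto
  finally show "(z \<bullet> (Mmat \<nu> d V lam *v z) + 2 * (cvec \<nu> d V lam \<bullet> z)) * t
      + (z \<bullet> (Nmat \<nu> d V lam *v z) - 2 * (cvec \<nu> d V lam \<bullet> z)) \<le> fgen \<nu> t" .
qed

lemma certificate_expectation:
  fixes p q :: "'a measure" and \<phi> :: "'a \<Rightarrow> real^'m" and V :: "'m \<Rightarrow> real^'m"
  assumes "finite_second_moments p \<phi>" "finite_second_moments q \<phi>"
    and orth: "\<And>i j. V i \<bullet> (second_moment q \<phi> *v V j) = (if i = j then 1 else 0)"
    and eig: "\<And>i. second_moment p \<phi> *v V i = lam i *\<^sub>R (second_moment q \<phi> *v V i)"
    and pos: "\<And>i. 0 < lam i"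
  defines "d \<equiv> mean_vec p \<phi> - mean_vec q \<phi>"
  shows "(\<integral>x. \<phi> x \<bullet> (Mmat \<nu> d V lam *v \<phi> x) + 2 * (cvec \<nu> d V lam \<bullet> \<phi> x) \<partial>p)
       + (\<integral>x. \<phi> x \<bullet> (Nmat \<nu> d V lam *v \<phi> x) - 2 * (cvec \<nu> d V lam \<bullet> \<phi> x) \<partial>q)
       = (\<Sum>i\<in>UNIV. hfun \<nu> (lam i) * (d \<bullet> V i)^2)"
proof -
  interpret P: finite_second_moments p \<phi> by fact
  interpret Q: finite_second_moments q \<phi> by fact
  define c where "c = cvec \<nu> d V lam"
  have Sp: "V i \<bullet> (second_moment p \<phi> *v V j) = (if i = j then lam i else 0)" for i j
    using orth[of i j] by (simp add: eig)
  have v: "(\<integral>x. \<phi> x \<bullet> (Mmat \<nu> d V lam *v \<phi> x) + 2 * (c \<bullet> \<phi> x) \<partial>p)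
      = (\<Sum>i\<in>UNIV. (d \<bullet> V i) * (V i \<bullet> d) * divdiff (hfun \<nu>) (lam i) (lam i) * lam i)
        + 2 * (c \<bullet> mean_vec p \<phi>)"
    by (simp add: inner_Mmat P.integral_quadratic_form_eigenbasis[OF Sp] P.integrable_quadratic_feature
        P.integrable_feature P.integral_inner_feature)
  have w: "(\<integral>x. \<phi> x \<bullet> (Nmat \<nu> d V lam *v \<phi> x) - 2 * (c \<bullet> \<phi> x) \<partial>q)
      = - (\<Sum>i\<in>UNIV. (d \<bullet> V i) * (V i \<bullet> d) * divdiff (\<lambda>l. l * hfun \<nu> l) (lam i) (lam i) * 1)
        - 2 * (c \<bullet> mean_vec q \<phi>)"
    by (simp add: inner_Nmat Q.integral_quadratic_form_eigenbasis[OF orth] Q.integrable_quadratic_feature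
        Q.integrable_feature Q.integral_inner_feature)
  have "c \<bullet> mean_vec p \<phi> - c \<bullet> mean_vec q \<phi> = c \<bullet> d"
    by (simp add: d_def inner_diff_right)
  also have "\<dots> = (\<Sum>i\<in>UNIV. hfun \<nu> (lam i) * (d \<bullet> V i)^2)"
    unfolding c_def cvec_inner by (simp add: inner_commute power2_eq_square mult_ac)
  finally have cd: "c \<bullet> mean_vec p \<phi> - c \<bullet> mean_vec q \<phi> = (\<Sum>i\<in>UNIV. hfun \<nu> (lam i) * (d \<bullet> V i)^2)" .
  have "(\<Sum>i\<in>UNIV. (d \<bullet> V i) * (V i \<bullet> d) * divdiff (hfun \<nu>) (lam i) (lam i) * lam i)
      - (\<Sum>i\<in>UNIV. (d \<bullet> V i) * (V i \<bullet> d) * divdiff (\<lambda>l. l * hfun \<nu> l) (lam i) (lam i) * 1)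
      = (\<Sum>i\<in>UNIV. (d \<bullet> V i)^2 * (lam i * divdiff (hfun \<nu>) (lam i) (lam i)
          - divdiff (\<lambda>l. l * hfun \<nu> l) (lam i) (lam i)))"
    by (simp add: sum_subtractf[symmetric] inner_commute power2_eq_square algebra_simps)
  also have "\<dots> = - (\<Sum>i\<in>UNIV. hfun \<nu> (lam i) * (d \<bullet> V i)^2)"
    by (simp add: divdiff_combination_diagonal pos sum_negf[symmetric] mult.commute)
  finally show ?thesis
    unfolding c_def[symmetric] v w using cd by linarith
qed

end

theorem proposition2:
  fixes \<nu> :: "real measure" and p q :: "'a measure" and \<phi> :: "'a \<Rightarrow> real^'m"
    and V :: "'m \<Rightarrow> real^'m" and lam :: "'m \<Rightarrow> real"
  assumes nu_prob: "prob_space \<nu>" and nu_borel: "sets \<nu> = sets borel"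
    and nu_supp: "AE \<rho> in \<nu>. 0 \<le> \<rho> \<and> \<rho> \<le> 1"
    and p_prob: "prob_space p" and q_prob: "prob_space q"
    and sets_pq: "sets q = sets p"
    and phi_meas: "\<phi> \<in> borel_measurable p"
    and p_mom: "\<And>i j. integrable p (\<lambda>x. \<phi> x $ i * \<phi> x $ j)"
    and q_mom: "\<And>i j. integrable q (\<lambda>x. \<phi> x $ i * \<phi> x $ j)"
    and Sq_inv: "invertible (second_moment q \<phi>)"
    and V_orth: "\<And>i j. V i \<bullet> (second_moment q \<phi> *v V j) = (if i = j then 1 else 0)"
    and V_eig: "\<And>i. second_moment p \<phi> *v V i = lam i *\<^sub>R (second_moment q \<phi> *v V i)"
    and lam_pos: "\<And>i. lam i > 0"
  defines "d \<equiv> mean_vec p \<phi> - mean_vec q \<phi>"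
  shows "(\<forall>x\<in>space p.
            ereal (\<phi> x \<bullet> (Nmat \<nu> d V lam *v \<phi> x) - 2 * (cvec \<nu> d V lam \<bullet> \<phi> x))
              \<le> - fconj \<nu> (\<phi> x \<bullet> (Mmat \<nu> d V lam *v \<phi> x) + 2 * (cvec \<nu> d V lam \<bullet> \<phi> x)))
       \<and> Fdiv \<nu> p q \<phi>
           = (\<integral>x. \<phi> x \<bullet> (Mmat \<nu> d V lam *v \<phi> x) + 2 * (cvec \<nu> d V lam \<bullet> \<phi> x) \<partial>p)
           + (\<integral>x. \<phi> x \<bullet> (Nmat \<nu> d V lam *v \<phi> x) - 2 * (cvec \<nu> d V lam \<bullet> \<phi> x) \<partial>q)
       \<and> Fdiv \<nu> p q \<phi> = (\<Sum>i\<in>UNIV. hfun \<nu> (lam i) * (d \<bullet> V i)^2)"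
proof -
  interpret mixing_measure \<nu>
    using nu_prob nu_borel nu_supp by (simp add: mixing_measure_def mixing_measure_axioms_def)
  have "\<phi> \<in> borel_measurable q"
    using phi_meas by (simp add: measurable_cong_sets[OF sets_pq refl])
  then have Q: "finite_second_moments q \<phi>"
    using q_prob q_mom by (simp add: finite_second_moments_def finite_second_moments_axioms_def)
  have P: "finite_second_moments p \<phi>"
    using p_prob phi_meas p_mom by (simp add: finite_second_moments_def finite_second_moments_axioms_def)
  show ?thesis
    using certificate_expectation[OF P Q V_orth V_eig lam_pos, folded d_def]
      Fdiv_eq_eigen_sum[OF V_orth V_eig lam_pos, folded d_def]
    by (simp add: certificate_feasible[OF lam_pos])
qed

end
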